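(* Every admissible sequence $i_n\cdots i_1$ with $i_1=1$ is equivalent to a sequence of one of the following seven types: 1. $(213)^m(21)^n$; 2. $3(213)^m(21)^n$; 3. $13(213)^m(21)^n$; 4. $(312)^m(31)^n$; 5. $2(312)^m(31)^n$; 6. $12(312)^m(31)^n$; 7. $1(21)^n$ (which is equivalent to $1(31)^n$). Here $m\ge0$ and $n\ge1$ in types 1–6, and $n\ge0$ in type 7. Moreover, this list is closed under prepending: if $\alpha$ is of one of these types and $i\in\{1,2,3\}$ differs from the first (leftmost) index of $\alpha$, then $i\alpha$ is equivalent to a sequence of one of these types.
   Context: A finite sequence $s=i_n i_{n-1}\cdots i_1$ with $i_p\in\{1,2,3\}$ (written as a word read from left to right, with $i_1$ the rightmost letter) is called admissible if adjacent indices are distinct ($i_p\neq i_{p+1}$). Admissible sequences are considered up to the equivalence relation generated by replacing any consecutive subword $iji$ by $iki$, where $\{i,j,k\}=\{1,2,3\}$. Powers denote repeated concatenation, e.g. $(21)^2=2121$ and $(213)^0$ is empty. *)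

theory Defs
  imports Main
begin

text \<open>A sequence i_n ... i_1 is represented as the list [i_n, ..., i_1]:
  the head is the leftmost letter i_n, the last element is i_1.\<close>

definition admissible :: "nat list \<Rightarrow> bool" where
  "admissible s \<longleftrightarrow> set s \<subseteq> {1,2,3} \<and> (\<forall>p. Suc p < length s \<longrightarrow> s ! p \<noteq> s ! Suc p)"

definition move :: "nat list \<Rightarrow> nat list \<Rightarrow> bool" where
  "move s t \<longleftrightarrow> (\<exists>u v i j k. {i,j,k} = {1,2,3} \<and> s = u @ [i,j,i] @ v \<and> t = u @ [i,k,i] @ v)"

definition equiv_seq :: "nat list \<Rightarrow> nat list \<Rightarrow> bool" where
  "equiv_seq = equivclp move"

definition pw :: "nat list \<Rightarrow> nat \<Rightarrow> nat list" where
  "pw w m = concat (replicate m w)"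

definition of_listed_type :: "nat list \<Rightarrow> bool" where
  "of_listed_type s \<longleftrightarrow>
     (\<exists>m n. n \<ge> 1 \<and>
        (s = pw [2,1,3] m @ pw [2,1] n
       \<or> s = [3] @ pw [2,1,3] m @ pw [2,1] n
       \<or> s = [1,3] @ pw [2,1,3] m @ pw [2,1] n
       \<or> s = pw [3,1,2] m @ pw [3,1] n
       \<or> s = [2] @ pw [3,1,2] m @ pw [3,1] n
       \<or> s = [1,2] @ pw [3,1,2] m @ pw [3,1] n))
   \<or> (\<exists>n. s = [1] @ pw [2,1] n)"

end

theory Submission
  imports Defs
begin

text \<open>Build the sequence from right to left, one letter at a time, and show that prepending
  an admissible letter to a listed word yields a word equivalent to a listed one. Write
  \<open>{a, b} = {2, 3}\<close>. Two local identities do all the work: \<open>1a1 \<sim> 1b1\<close>, which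
  turns \<open>1(a1)\<^sup>n\<close> into \<open>1(b1)\<^sup>n\<close>, and \<open>a1 a1b a \<sim> a1b a1 a\<close> (three moves), which lets
  a factor \<open>a1\<close> travel to the right through the blocks \<open>(a1b)\<^sup>m\<close> and hence gives
  \<open>ab(a1b)\<^sup>m(a1)\<^sup>n \<sim> (a1b)\<^sup>m(a1)\<^sup>n\<^sup>+\<^sup>1\<close>.\<close>

lemma equiv_seq_refl [simp]: "equiv_seq s s"
  unfolding equiv_seq_def by simp

lemma equiv_seq_trans [trans]: "equiv_seq s t \<Longrightarrow> equiv_seq t u \<Longrightarrow> equiv_seq s u"
  unfolding equiv_seq_def by (rule equivclp_trans)

lemma equiv_seq_by_move:
  assumes "{i, j, k} = {1, 2, 3}" "s = u @ [i, j, i] @ v" "t = u @ [i, k, i] @ v"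
  shows "equiv_seq s t"
  using assms unfolding equiv_seq_def move_def by blast

lemma move_append: "move s t \<Longrightarrow> move (u @ s @ v) (u @ t @ v)"
  unfolding move_def by (metis append.assoc)

lemma equiv_seq_append: "equiv_seq s t \<Longrightarrow> equiv_seq (u @ s @ v) (u @ t @ v)"
  unfolding equiv_seq_def
proof (induction rule: equivclp_induct)
  case (step t t')
  then show ?case by (meson equivclp_into_equivclp move_append)
qed simp

lemma equiv_seq_append_left: "equiv_seq s t \<Longrightarrow> equiv_seq (u @ s) (u @ t)"
  using equiv_seq_append[of s t u "[]"] by simp

lemma equiv_seq_Cons: "equiv_seq s t \<Longrightarrow> equiv_seq (x # s) (x # t)"
  using equiv_seq_append_left[of s t "[x]"] by simp

lemma move_hd_eq: "move s t \<Longrightarrow> hd s = hd t"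
  unfolding move_def by (auto simp: hd_append)

lemma equiv_seq_hd_eq: "equiv_seq s t \<Longrightarrow> hd s = hd t"
  unfolding equiv_seq_def
  by (induction rule: equivclp_induct) (auto dest: move_hd_eq)

lemma pw_0 [simp]: "pw w 0 = []"
  unfolding pw_def by simp

lemma pw_Suc [simp]: "pw w (Suc m) = w @ pw w m"
  unfolding pw_def by simp

lemma admissible_Cons:
  "admissible (x # s) \<longleftrightarrow> x \<in> {1, 2, 3} \<and> admissible s \<and> (s \<noteq> [] \<longrightarrow> x \<noteq> hd s)"
proof -
  have split_nat: "(\<forall>p. P p) \<longleftrightarrow> P 0 \<and> (\<forall>p. P (Suc p))" for P
    by (metis not0_implies_Suc)
  show ?thesis
    unfolding admissible_def
      split_nat[of "\<lambda>p. Suc p < length (x # s) \<longrightarrow> (x # s) ! p \<noteq> (x # s) ! Suc p"]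
    by (cases s) auto
qed

definition canon_word :: "nat \<Rightarrow> nat \<Rightarrow> nat \<Rightarrow> nat \<Rightarrow> nat list" where
  "canon_word a b m n = pw [a, 1, b] m @ pw [a, 1] n"

lemma canon_word_Suc_left [simp]: "canon_word a b (Suc m) n = a # 1 # b # canon_word a b m n"
  unfolding canon_word_def by simp

lemma canon_word_hd: "n \<ge> 1 \<Longrightarrow> \<exists>w. canon_word a b m n = a # w"
  by (cases m; cases n) (auto simp: canon_word_def)

lemma of_listed_type_canon_word:
  assumes "{a, b} = {2, 3}" "n \<ge> 1"
  shows "of_listed_type (canon_word a b m n)"
    and "of_listed_type (b # canon_word a b m n)"
    and "of_listed_type (1 # b # canon_word a b m n)"
  using assms unfolding of_listed_type_def canon_word_def
  by (auto simp: doubleton_eq_iff)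

lemma of_listed_type_cases:
  assumes "of_listed_type s"
  obtains (canon) a b m n where "{a, b} = {2, 3}" "n \<ge> 1" "s = canon_word a b m n"
    | (b_canon) a b m n where "{a, b} = {2, 3}" "n \<ge> 1" "s = b # canon_word a b m n"
    | (one_b_canon) a b m n where "{a, b} = {2, 3}" "n \<ge> 1" "s = 1 # b # canon_word a b m n"
    | (one_pw) n where "s = 1 # pw [2, 1] n"
proof -
  have ab23: "{2, 3} = {2, 3::nat}" and ab32: "{3, 2} = {2, 3::nat}"
    by auto
  from assms show ?thesis
    unfolding of_listed_type_def
  proof (elim disjE exE conjE)
    fix m n :: nat
    assume "n \<ge> 1"
    then show "s = pw [2, 1, 3] m @ pw [2, 1] n \<Longrightarrow> thesis"
      and "s = [3] @ pw [2, 1, 3] m @ pw [2, 1] n \<Longrightarrow> thesis"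
      and "s = [1, 3] @ pw [2, 1, 3] m @ pw [2, 1] n \<Longrightarrow> thesis"
      using canon[OF ab23] b_canon[OF ab23] one_b_canon[OF ab23]
      by (simp_all add: canon_word_def)
    show "s = pw [3, 1, 2] m @ pw [3, 1] n \<Longrightarrow> thesis"
      and "s = [2] @ pw [3, 1, 2] m @ pw [3, 1] n \<Longrightarrow> thesis"
      and "s = [1, 2] @ pw [3, 1, 2] m @ pw [3, 1] n \<Longrightarrow> thesis"
      using \<open>n \<ge> 1\<close> canon[OF ab32] b_canon[OF ab32] one_b_canon[OF ab32]
      by (simp_all add: canon_word_def)
  qed (use one_pw in simp)
qed

definition has_listed_form :: "nat list \<Rightarrow> bool" where
  "has_listed_form s \<longleftrightarrow> (\<exists>t. of_listed_type t \<and> equiv_seq s t)"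

lemma of_listed_type_imp_has_listed_form: "of_listed_type s \<Longrightarrow> has_listed_form s"
  unfolding has_listed_form_def by auto

lemma has_listed_form_equiv_seq: "equiv_seq s t \<Longrightarrow> has_listed_form t \<Longrightarrow> has_listed_form s"
  unfolding has_listed_form_def by (meson equiv_seq_trans)

lemma equiv_seq_1_pw_swap:
  assumes "{a, b} = {2, 3}"
  shows "equiv_seq (1 # pw [a, 1] n) (1 # pw [b, 1] n)"
proof (induction n)
  case (Suc n)
  have "equiv_seq (1 # pw [a, 1] (Suc n)) ([1, b] @ 1 # pw [a, 1] n)"
    by (rule equiv_seq_by_move[of 1 a b _ "[]" "pw [a, 1] n"])
      (use assms in \<open>auto simp: doubleton_eq_iff\<close>)
  also have "equiv_seq \<dots> ([1, b] @ 1 # pw [b, 1] n)"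
    using Suc.IH by (rule equiv_seq_append_left)
  finally show ?case by simp
qed simp

lemma has_listed_form_1_pw:
  assumes "{a, b} = {2, 3}"
  shows "has_listed_form (1 # pw [a, 1] n)"
proof -
  have "of_listed_type (1 # pw [2, 1] n)"
    unfolding of_listed_type_def by auto
  moreover have "equiv_seq (1 # pw [a, 1] n) (1 # pw [2, 1] n)"
    using assms equiv_seq_1_pw_swap[OF assms] by (auto simp: doubleton_eq_iff)
  ultimately show ?thesis
    unfolding has_listed_form_def by blast
qed

lemma equiv_seq_commute_a1_a1b:
  assumes "{a, b} = {2, 3}"
  shows "equiv_seq ([a, 1] @ [a, 1, b] @ a # v) ([a, 1, b] @ [a, 1] @ a # v)"
proof -
  have "equiv_seq ([a, 1] @ [a, 1, b] @ a # v) ([a] @ [1, b, 1] @ b # a # v)"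
    by (rule equiv_seq_by_move[of 1 a b _ "[a]" "b # a # v"])
      (use assms in \<open>auto simp: doubleton_eq_iff\<close>)
  also have "equiv_seq \<dots> ([a, 1] @ [b, a, b] @ a # v)"
    by (rule equiv_seq_by_move[of b 1 a _ "[a, 1]" "a # v"])
      (use assms in \<open>auto simp: doubleton_eq_iff\<close>)
  also have "equiv_seq \<dots> ([a, 1, b] @ [a, 1, a] @ v)"
    by (rule equiv_seq_by_move[of a b 1 _ "[a, 1, b]" v])
      (use assms in \<open>auto simp: doubleton_eq_iff\<close>)
  finally show ?thesis by simp
qed

lemma equiv_seq_commute_a1_pw:
  assumes "{a, b} = {2, 3}"
  shows "equiv_seq ([a, 1] @ pw [a, 1, b] m @ a # v) (pw [a, 1, b] m @ [a, 1] @ a # v)"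
proof (induction m)
  case (Suc m)
  obtain w where w: "pw [a, 1, b] m @ a # v = a # w"
    by (cases m) auto
  have "equiv_seq ([a, 1] @ pw [a, 1, b] (Suc m) @ a # v) ([a, 1, b] @ [a, 1] @ a # w)"
    using equiv_seq_commute_a1_a1b[OF assms, of w] w by simp
  also have "equiv_seq \<dots> ([a, 1, b] @ pw [a, 1, b] m @ [a, 1] @ a # v)"
    using equiv_seq_append_left[OF Suc.IH, of "[a, 1, b]"] w by simp
  finally show ?case by simp
qed simp

lemma equiv_seq_ab_canon_word:
  assumes "{a, b} = {2, 3}" "n \<ge> 1"
  shows "equiv_seq (a # b # canon_word a b m n) (canon_word a b m (Suc n))"
proof -
  obtain w where w: "canon_word a b m n = a # w"
    using canon_word_hd[OF assms(2)] by blast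
  obtain n' where n': "n = Suc n'"
    using assms(2) by (cases n) auto
  have "equiv_seq (a # b # canon_word a b m n) (a # 1 # canon_word a b m n)"
    by (rule equiv_seq_by_move[of a b 1 _ "[]" w])
      (use assms w in \<open>auto simp: doubleton_eq_iff\<close>)
  also have "a # 1 # canon_word a b m n = [a, 1] @ pw [a, 1, b] m @ a # 1 # pw [a, 1] n'"
    by (simp add: canon_word_def n')
  also have "equiv_seq \<dots> (pw [a, 1, b] m @ [a, 1] @ a # 1 # pw [a, 1] n')"
    by (rule equiv_seq_commute_a1_pw[OF assms(1)])
  also have "\<dots> = canon_word a b m (Suc n)"
    by (simp add: canon_word_def n')
  finally show ?thesis .
qed

lemma has_listed_form_Cons_canon_word:
  assumes ab: "{a, b} = {2, 3}" and n: "n \<ge> 1" and i: "i \<in> {1, 2, 3}" "i \<noteq> a"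
  shows "has_listed_form (i # canon_word a b m n)"
proof -
  consider "i = b" | "i = 1"
    using ab i by (auto simp: doubleton_eq_iff)
  then show ?thesis
  proof cases
    case 1
    then show ?thesis
      using of_listed_type_canon_word(2)[OF ab n] of_listed_type_imp_has_listed_form by simp
  next
    case 2
    show ?thesis
    proof (cases m)
      case 0
      then show ?thesis
        using has_listed_form_1_pw[OF ab] \<open>i = 1\<close> by (simp add: canon_word_def)
    next
      case (Suc k)
      have "equiv_seq (1 # canon_word a b m n) (1 # b # 1 # b # canon_word a b k n)"
        by (rule equiv_seq_by_move[of 1 a b _ "[]" "b # canon_word a b k n"])
          (use ab Suc in \<open>auto simp: doubleton_eq_iff\<close>)
      also have "equiv_seq \<dots> ([1, b] @ a # b # canon_word a b k n)"
        by (rule equiv_seq_by_move[of b 1 a _ "[1]" "canon_word a b k n"])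
          (use ab in \<open>auto simp: doubleton_eq_iff\<close>)
      also have "equiv_seq \<dots> ([1, b] @ canon_word a b k (Suc n))"
        using equiv_seq_ab_canon_word[OF ab n] by (rule equiv_seq_append_left)
      finally show ?thesis
        using \<open>i = 1\<close> of_listed_type_canon_word(3)[OF ab, of "Suc n" k]
        unfolding has_listed_form_def by auto
    qed
  qed
qed

lemma has_listed_form_Cons_b_canon_word:
  assumes ab: "{a, b} = {2, 3}" and n: "n \<ge> 1" and i: "i \<in> {1, 2, 3}" "i \<noteq> b"
  shows "has_listed_form (i # b # canon_word a b m n)"
proof -
  consider "i = 1" | "i = a"
    using ab i by (auto simp: doubleton_eq_iff)
  then show ?thesis
  proof cases
    case 1
    then show ?thesis
      using of_listed_type_canon_word(3)[OF ab n] of_listed_type_imp_has_listed_form by simp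
  next
    case 2
    then show ?thesis
      using equiv_seq_ab_canon_word[OF ab n] of_listed_type_canon_word(1)[OF ab, of "Suc n" m]
      unfolding has_listed_form_def by auto
  qed
qed

lemma has_listed_form_Cons_1_b_canon_word:
  assumes ab: "{a, b} = {2, 3}" and n: "n \<ge> 1" and i: "i \<in> {1, 2, 3}" "i \<noteq> 1"
  shows "has_listed_form (i # 1 # b # canon_word a b m n)"
proof -
  consider "i = a" | "i = b"
    using ab i by (auto simp: doubleton_eq_iff)
  then show ?thesis
  proof cases
    case 1
    then show ?thesis
      using of_listed_type_canon_word(1)[OF ab n, of "Suc m"] of_listed_type_imp_has_listed_form
      by simp
  next
    case 2
    have "equiv_seq (b # 1 # b # canon_word a b m n) (b # a # b # canon_word a b m n)"
      by (rule equiv_seq_by_move[of b 1 a _ "[]" "canon_word a b m n"])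
        (use ab in \<open>auto simp: doubleton_eq_iff\<close>)
    also have "equiv_seq \<dots> (b # canon_word a b m (Suc n))"
      using equiv_seq_ab_canon_word[OF ab n] by (rule equiv_seq_Cons)
    finally show ?thesis
      using \<open>i = b\<close> of_listed_type_canon_word(2)[OF ab, of "Suc n" m]
      unfolding has_listed_form_def by auto
  qed
qed

lemma has_listed_form_Cons_1_pw:
  assumes "i \<in> {1, 2, 3}" "i \<noteq> 1"
  shows "has_listed_form (i # 1 # pw [2, 1] n)"
proof -
  consider "i = 2" | "i = 3"
    using assms by auto
  then show ?thesis
  proof cases
    case 1
    then show ?thesis
      using of_listed_type_canon_word(1)[of 2 3 "Suc n" 0] of_listed_type_imp_has_listed_form
      by (simp add: canon_word_def)
  next
    case 2
    have "equiv_seq (3 # 1 # pw [2, 1] n) (3 # 1 # pw [3, 1] n)"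
      using equiv_seq_1_pw_swap[of 2 3 n] by (simp add: equiv_seq_Cons)
    then show ?thesis
      using \<open>i = 3\<close> of_listed_type_canon_word(1)[of 3 2 "Suc n" 0]
      unfolding has_listed_form_def canon_word_def by auto
  qed
qed

lemma of_listed_type_Cons_has_listed_form:
  assumes "of_listed_type \<alpha>" "i \<in> {1, 2, 3}" "i \<noteq> hd \<alpha>"
  shows "has_listed_form (i # \<alpha>)"
  using assms(1)
proof (cases rule: of_listed_type_cases)
  case (canon a b m n)
  obtain w where "canon_word a b m n = a # w"
    using canon_word_hd[OF canon(2)] by blast
  then have "i \<noteq> a"
    using canon(3) assms(3) by simp
  then show ?thesis
    using has_listed_form_Cons_canon_word[OF canon(1,2) assms(2)] canon(3) by simp
next
  case (b_canon a b m n)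
  then show ?thesis
    using has_listed_form_Cons_b_canon_word assms(2,3) by simp
next
  case (one_b_canon a b m n)
  then show ?thesis
    using has_listed_form_Cons_1_b_canon_word assms(2,3) by simp
next
  case (one_pw n)
  then show ?thesis
    using has_listed_form_Cons_1_pw assms(2,3) by simp
qed

lemma has_listed_form_Cons:
  assumes "has_listed_form s" "i \<in> {1, 2, 3}" "i \<noteq> hd s"
  shows "has_listed_form (i # s)"
proof -
  obtain t where t: "of_listed_type t" "equiv_seq s t"
    using assms(1) unfolding has_listed_form_def by blast
  have "has_listed_form (i # t)"
    using of_listed_type_Cons_has_listed_form[OF t(1) assms(2)] assms(3)
      equiv_seq_hd_eq[OF t(2)]
    by simp
  then show ?thesis
    using has_listed_form_equiv_seq[OF equiv_seq_Cons[OF t(2)]] by blast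
qed

lemma admissible_has_listed_form:
  "admissible s \<Longrightarrow> s \<noteq> [] \<Longrightarrow> last s = 1 \<Longrightarrow> has_listed_form s"
proof (induction s)
  case (Cons x s)
  show ?case
  proof (cases "s = []")
    case True
    then show ?thesis
      using Cons.prems has_listed_form_1_pw[of 2 3 0] by simp
  next
    case False
    then show ?thesis
      using Cons has_listed_form_Cons by (simp add: admissible_Cons)
  qed
qed simp

theorem mainTheorem16:
  shows "(\<forall>s. admissible s \<and> s \<noteq> [] \<and> last s = 1 \<longrightarrow>
            (\<exists>t. of_listed_type t \<and> equiv_seq s t))
       \<and> (\<forall>n. equiv_seq ([1] @ pw [2,1] n) ([1] @ pw [3,1] n))
       \<and> (\<forall>\<alpha> i. of_listed_type \<alpha> \<and> i \<in> {1,2,3} \<and> i \<noteq> hd \<alpha> \<longrightarrow>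
            (\<exists>t. of_listed_type t \<and> equiv_seq (i # \<alpha>) t))"
  using admissible_has_listed_form of_listed_type_Cons_has_listed_form equiv_seq_1_pw_swap[of 2 3]
  unfolding has_listed_form_def by auto

end
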